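(* Let $d$ be a pseudo-metric on $[0,1]$ and $\Psi:\mathbb R_+\to\mathbb R_+$ continuous, strictly increasing with $\Psi(0)=0$, such that $F(1):=\mathcal V(\Psi,d)<\infty$. Then $$N([0,1],d,\varepsilon)\le\frac{4F(1)}{\Psi(\varepsilon)}\qquad\text{for all }0<\varepsilon<\Psi^{-1}(F(1)).$$ More generally, with $F(t)=\sup\sum_{i=1}^n\Psi(d(t_i,t_{i-1}))$ over partitions $0=t_0<\dots<t_n=t$, for every $m\in\mathbb Z$ and integer $j\ge1$ the set $S_{m,j}=\{s\in[0,1]:F(s)\in((j-1)2^{-m},j2^{-m}]\}$ satisfies $N(S_{m,j},d,\varepsilon)\le 2^{-m+2}/\Psi(\varepsilon)$ for $0<\varepsilon<\Psi^{-1}(2^{-m})$.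
   Context: $\mathcal V(\Psi,d)=\sup\sum_{i=1}^n\Psi(d(t_i,t_{i-1}))$ over all partitions $0=t_0<\dots<t_n=1$. For $A\subset[0,1]$, $N(A,d,\varepsilon)$ is the smallest number of open $d$-balls of radius $\varepsilon$ (centred in $A$) covering $A$. *)

theory Defs
  imports "HOL-Analysis.Analysis"
begin

definition pseudo_metric_on01 :: "(real \<Rightarrow> real \<Rightarrow> real) \<Rightarrow> bool" where
  "pseudo_metric_on01 d \<longleftrightarrow>
     (\<forall>x\<in>{0..1}. d x x = 0) \<and>
     (\<forall>x\<in>{0..1}. \<forall>y\<in>{0..1}. 0 \<le> d x y \<and> d x y = d y x) \<and>
     (\<forall>x\<in>{0..1}. \<forall>y\<in>{0..1}. \<forall>z\<in>{0..1}. d x z \<le> d x y + d y z)"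

definition partition_of :: "real \<Rightarrow> nat \<Rightarrow> (nat \<Rightarrow> real) \<Rightarrow> bool" where
  "partition_of t n p \<longleftrightarrow> p 0 = 0 \<and> p n = t \<and> (\<forall>i<n. p i < p (Suc i))"

text \<open>F(t) = sup over partitions of [0,t] of sum Psi(d(t_i,t_{i-1})), valued in ereal
  (so that an unbounded supremum is \<infinity>). F(1) is V(Psi,d).\<close>
definition varF :: "(real \<Rightarrow> real) \<Rightarrow> (real \<Rightarrow> real \<Rightarrow> real) \<Rightarrow> real \<Rightarrow> ereal" where
  "varF \<Psi> d t = (SUP (n, p) \<in> {(n, p). partition_of t n p}.
                   ereal (\<Sum>i\<in>{1..n}. \<Psi> (d (p i) (p (i - 1)))))"

text \<open>Covering number N(A,d,eps): least number of open d-balls of radius eps centred in A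
  covering A (\<infinity> if there is no finite such cover).\<close>
definition cover_num :: "real set \<Rightarrow> (real \<Rightarrow> real \<Rightarrow> real) \<Rightarrow> real \<Rightarrow> enat" where
  "cover_num A d \<epsilon> = (INF C \<in> {C. finite C \<and> C \<subseteq> A \<and> A \<subseteq> (\<Union>c\<in>C. {x. d c x < \<epsilon>})}.
                        enat (card C))"

end

theory Submission
  imports Defs
begin

text \<open>Adding a point t > s to a partition of [0,s] shows that F is superadditive:
  F(s) + \<Psi>(d(s,t)) \<le> F(t). Hence the F-values of the points of an \<epsilon>-separated set S,
  listed in increasing order, grow by at least \<Psi>(\<epsilon>) from one point to the next, and
  S has at most 1 + H/\<Psi>(\<epsilon>) points when F oscillates by at most H on S. A maximal
  \<epsilon>-separated subset of a set is an \<epsilon>-cover of it, which bounds the covering number.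
  Finally 1 + H/\<Psi>(\<epsilon>) \<le> 4H/\<Psi>(\<epsilon>) as soon as \<Psi>(\<epsilon>) < H.\<close>

lemma ereal_le_add_of_slab:
  assumes "ereal a < x" "y \<le> ereal (a + h)"
  shows "y \<le> x + ereal h"
  using assms by (metis add_right_mono less_imp_le order.trans plus_ereal.simps(1))

definition separated :: "('a \<Rightarrow> 'a \<Rightarrow> real) \<Rightarrow> real \<Rightarrow> 'a set \<Rightarrow> bool" where
  "separated d \<epsilon> C \<longleftrightarrow> (\<forall>x\<in>C. \<forall>y\<in>C. x \<noteq> y \<longrightarrow> \<epsilon> \<le> d x y)"

lemma separated_insert:
  assumes "separated d \<epsilon> C" "\<forall>c\<in>C. \<epsilon> \<le> d c x" "\<forall>c\<in>C. d x c = d c x"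
  shows "separated d \<epsilon> (insert x C)"
  using assms unfolding separated_def by (metis insert_iff)

lemma cover_num_le_card:
  assumes "finite C" "C \<subseteq> A" "A \<subseteq> (\<Union>c\<in>C. {x. d c x < \<epsilon>})"
  shows "cover_num A d \<epsilon> \<le> enat (card C)"
  unfolding cover_num_def by (rule INF_lower) (use assms in blast)

lemma cover_num_le_separated_bound:
  assumes sym: "\<forall>x\<in>A. \<forall>y\<in>A. d x y = d y x" and refl: "\<forall>x\<in>A. d x x < \<epsilon>"
    and bound: "\<And>C. finite C \<Longrightarrow> C \<subseteq> A \<Longrightarrow> separated d \<epsilon> C \<Longrightarrow> real (card C) \<le> B"
  shows "ereal_of_enat (cover_num A d \<epsilon>) \<le> ereal B"
proof -
  define Sep where "Sep C \<longleftrightarrow> finite C \<and> C \<subseteq> A \<and> separated d \<epsilon> C" for C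
  have "Sep {}" by (simp add: Sep_def separated_def)
  moreover have "\<forall>C. Sep C \<longrightarrow> card C < Suc (nat \<lceil>B\<rceil>)"
    using bound unfolding Sep_def by (metis less_Suc_eq_le of_nat_le_iff real_nat_ceiling_ge order.trans)
  ultimately obtain C0 where C0: "Sep C0" and maximal: "\<And>C. Sep C \<Longrightarrow> card C \<le> card C0"
    using ex_has_greatest_nat[of Sep "{}" card] by blast
  have "A \<subseteq> (\<Union>c\<in>C0. {x. d c x < \<epsilon>})"
  proof
    fix x assume x: "x \<in> A"
    show "x \<in> (\<Union>c\<in>C0. {x. d c x < \<epsilon>})"
    proof (rule ccontr)
      assume far: "x \<notin> (\<Union>c\<in>C0. {x. d c x < \<epsilon>})"
      then have "x \<notin> C0" using refl x by auto
      moreover have "Sep (insert x C0)"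
        using C0 x far sym separated_insert[of d \<epsilon> C0 x] unfolding Sep_def
        by (auto simp: not_less subset_eq)
      ultimately show False using maximal[of "insert x C0"] C0 by (simp add: Sep_def)
    qed
  qed
  then have "cover_num A d \<epsilon> \<le> enat (card C0)"
    using C0 cover_num_le_card unfolding Sep_def by blast
  then have "ereal_of_enat (cover_num A d \<epsilon>) \<le> ereal (card C0)"
    by (metis ereal_of_enat_le_iff ereal_of_enat_simps(1))
  also have "\<dots> \<le> ereal B"
    using bound C0 unfolding Sep_def by simp
  finally show ?thesis .
qed

lemma increments_le_spread:
  fixes G :: "'a::linorder \<Rightarrow> real"
  assumes "finite C" "C \<noteq> {}" "\<forall>x\<in>C. \<forall>y\<in>C. x < y \<longrightarrow> G x + e \<le> G y"
  shows "G (Min C) + (real (card C) - 1) * e \<le> G (Max C)"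
  using assms
proof (induction C rule: finite_linorder_max_induct)
  case empty
  then show ?case by simp
next
  case (insert b A)
  show ?case
  proof (cases "A = {}")
    case True
    then show ?thesis by simp
  next
    case False
    have "b \<notin> A" using insert.hyps(2) by blast
    have "Max A < b" using insert.hyps(1,2) False Max_in by blast
    moreover have "Min A < b" using insert.hyps(1,2) False Min_in by blast
    ultimately have "Min (insert b A) = Min A" "Max (insert b A) = b"
      using insert.hyps(1) False by simp_all
    moreover have "G (Min A) + (real (card A) - 1) * e \<le> G (Max A)"
      using insert.IH False insert.prems(2) by simp
    moreover have "G (Max A) + e \<le> G b"
      using insert.prems(2) insert.hyps(1,2) False Max_in by simp
    moreover have "real (card (insert b A)) = real (card A) + 1"
      using \<open>b \<notin> A\<close> insert.hyps(1) by simp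
    ultimately show ?thesis
      by (simp add: algebra_simps)
  qed
qed

lemma card_le_by_increments:
  fixes G :: "'a::linorder \<Rightarrow> real"
  assumes "finite C" "0 < e"
    and "\<forall>x\<in>C. \<forall>y\<in>C. x < y \<longrightarrow> G x + e \<le> G y"
    and "\<forall>x\<in>C. \<forall>y\<in>C. x < y \<longrightarrow> G y \<le> G x + H" "0 \<le> H"
  shows "real (card C) \<le> 1 + H / e"
proof (cases "C = {}")
  case True
  then show ?thesis using assms by simp
next
  case False
  have "G (Max C) \<le> G (Min C) + H"
  proof (cases "Min C < Max C")
    case True
    then show ?thesis using assms(1,4) False Min_in Max_in by blast
  next
    case False
    then have "Min C = Max C"
      using Min_le[OF \<open>finite C\<close> Max_in[OF \<open>finite C\<close> \<open>C \<noteq> {}\<close>]] by simp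
    then show ?thesis using \<open>0 \<le> H\<close> by simp
  qed
  then have "(real (card C) - 1) * e \<le> H"
    using increments_le_spread[OF assms(1) False assms(3)] by simp
  then have "real (card C) - 1 \<le> H / e"
    using \<open>0 < e\<close> by (simp add: pos_le_divide_eq)
  then show ?thesis by simp
qed

lemma varF_ge_partition_sum:
  "partition_of t n p \<Longrightarrow> ereal (\<Sum>i\<in>{1..n}. \<Psi> (d (p i) (p (i-1)))) \<le> varF \<Psi> d t"
  unfolding varF_def by (rule SUP_upper2[where i="(n,p)"]) auto

lemma varF_superadditive:
  assumes pm: "pseudo_metric_on01 d" and st: "0 \<le> s" "s < t" "t \<le> 1"
  shows "varF \<Psi> d s + ereal (\<Psi> (d s t)) \<le> varF \<Psi> d t"
proof -
  let ?I = "{(n, p). partition_of s n p}"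
  let ?f = "\<lambda>(n,p). ereal (\<Sum>i\<in>{1..n}. \<Psi> (d (p i) (p (i-1))))"
  have "(if s = 0 then (0, \<lambda>_. 0) else (1, \<lambda>i. if i = 0 then 0 else s)) \<in> ?I"
    using st by (simp add: partition_of_def)
  then have "?I \<noteq> {}" by blast
  then have "varF \<Psi> d s + ereal (\<Psi> (d s t)) = (SUP x\<in>?I. ?f x + ereal (\<Psi> (d s t)))"
    unfolding varF_def by (subst SUP_ereal_add_left) auto
  also have "\<dots> \<le> varF \<Psi> d t"
  proof (rule SUP_least, clarify)
    fix n p assume P: "partition_of s n p"
    define p' where "p' = p(Suc n := t)"
    have "partition_of t (Suc n) p'"
      using P st unfolding partition_of_def p'_def by (auto simp: less_Suc_eq)
    moreover have "(\<Sum>i\<in>{1..n}. \<Psi> (d (p' i) (p' (i-1)))) = (\<Sum>i\<in>{1..n}. \<Psi> (d (p i) (p (i-1))))"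
      by (rule sum.cong) (auto simp: p'_def)
    moreover have "d t s = d s t" using pm st unfolding pseudo_metric_on01_def by auto
    ultimately show "ereal (\<Sum>i\<in>{1..n}. \<Psi> (d (p i) (p (i-1)))) + ereal (\<Psi> (d s t)) \<le> varF \<Psi> d t"
      using P varF_ge_partition_sum[of t "Suc n" p' \<Psi> d] by (simp add: p'_def partition_of_def)
  qed
  finally show ?thesis .
qed

lemma varF_mono:
  assumes pm: "pseudo_metric_on01 d" and nonneg: "\<forall>x\<ge>0. 0 \<le> \<Psi> x"
    and st: "0 \<le> s" "s \<le> t" "t \<le> 1"
  shows "varF \<Psi> d s \<le> varF \<Psi> d t"
proof (cases "s = t")
  case False
  then have "varF \<Psi> d s + ereal (\<Psi> (d s t)) \<le> varF \<Psi> d t"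
    using st by (intro varF_superadditive[OF pm]) auto
  moreover have "0 \<le> \<Psi> (d s t)"
    using nonneg pm st unfolding pseudo_metric_on01_def by auto
  ultimately show ?thesis
    by (metis add_left_mono ereal_less_eq(5) order_trans add_0_right)
qed simp

lemma varF_nonneg:
  assumes pm: "pseudo_metric_on01 d" and nonneg: "\<forall>x\<ge>0. 0 \<le> \<Psi> x" and t: "0 \<le> t" "t \<le> 1"
  shows "0 \<le> varF \<Psi> d t"
proof -
  have "0 \<le> varF \<Psi> d 0"
    using varF_ge_partition_sum[of 0 0 "\<lambda>_. 0" \<Psi> d] by (simp add: partition_of_def zero_ereal_def)
  then show ?thesis using varF_mono[OF pm nonneg] t by (meson order.refl order.trans)
qed

lemma varF_real:
  assumes "pseudo_metric_on01 d" "\<forall>x\<ge>0. 0 \<le> \<Psi> x" "varF \<Psi> d 1 < \<infinity>" "0 \<le> t" "t \<le> 1"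
  shows "varF \<Psi> d t = ereal (real_of_ereal (varF \<Psi> d t))"
proof -
  have "varF \<Psi> d t < \<infinity>"
    using varF_mono[OF assms(1,2,4,5) order.refl] assms(3) by (rule order.strict_trans1)
  moreover have "0 \<le> varF \<Psi> d t" using varF_nonneg[OF assms(1,2,4,5)] .
  ultimately show ?thesis by (cases "varF \<Psi> d t") auto
qed

lemma varF_le_add_varF_1:
  assumes "pseudo_metric_on01 d" "\<forall>x\<ge>0. 0 \<le> \<Psi> x" "s \<in> {0..1}" "t \<in> {0..1}"
  shows "varF \<Psi> d t \<le> varF \<Psi> d s + varF \<Psi> d 1"
proof -
  have "varF \<Psi> d t \<le> 0 + varF \<Psi> d 1" "0 \<le> varF \<Psi> d s"
    using varF_mono[OF assms(1,2), of t 1] varF_nonneg[OF assms(1,2), of s] assms(3,4) by auto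
  then show ?thesis by (meson add_right_mono order.trans)
qed

lemma cover_num_le_by_varF_oscillation:
  assumes pm: "pseudo_metric_on01 d" and mono: "strict_mono_on {0..} \<Psi>" and "\<Psi> 0 = 0"
    and fin: "varF \<Psi> d 1 < \<infinity>" and A: "A \<subseteq> {0..1}" and "0 < \<epsilon>" "0 \<le> H"
    and osc: "\<forall>s\<in>A. \<forall>t\<in>A. s < t \<longrightarrow> varF \<Psi> d t \<le> varF \<Psi> d s + ereal H"
  shows "ereal_of_enat (cover_num A d \<epsilon>) \<le> ereal (1 + H / \<Psi> \<epsilon>)"
proof (rule cover_num_le_separated_bound)
  show "\<forall>x\<in>A. \<forall>y\<in>A. d x y = d y x" "\<forall>x\<in>A. d x x < \<epsilon>"
    using pm A \<open>0 < \<epsilon>\<close> unfolding pseudo_metric_on01_def by (auto simp: subset_eq)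
next
  fix C assume C: "finite C" "C \<subseteq> A" "separated d \<epsilon> C"
  have nonneg: "\<forall>x\<ge>0. 0 \<le> \<Psi> x"
    using strict_mono_on_leD[OF mono, of 0] \<open>\<Psi> 0 = 0\<close> by simp
  have Psi_pos: "0 < \<Psi> \<epsilon>"
    using strict_mono_onD[OF mono, of 0 \<epsilon>] \<open>0 < \<epsilon>\<close> \<open>\<Psi> 0 = 0\<close> by simp
  define G where "G t = real_of_ereal (varF \<Psi> d t)" for t
  have varF_G: "varF \<Psi> d t = ereal (G t)" if "t \<in> A" for t
    using varF_real[OF pm nonneg fin] that A unfolding G_def by auto
  show "real (card C) \<le> 1 + H / \<Psi> \<epsilon>"
  proof (rule card_le_by_increments[OF C(1) Psi_pos])
    show "\<forall>x\<in>C. \<forall>y\<in>C. x < y \<longrightarrow> G x + \<Psi> \<epsilon> \<le> G y"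
    proof (intro ballI impI)
      fix x y assume xy: "x \<in> C" "y \<in> C" "x < y"
      then have "\<epsilon> \<le> d x y" using C(3) unfolding separated_def by auto
      then have "\<Psi> \<epsilon> \<le> \<Psi> (d x y)"
        using strict_mono_on_leD[OF mono] \<open>0 < \<epsilon>\<close> by simp
      moreover have "varF \<Psi> d x + ereal (\<Psi> (d x y)) \<le> varF \<Psi> d y"
        using xy C(2) A by (intro varF_superadditive[OF pm]) auto
      moreover have "x \<in> A" "y \<in> A" using xy C(2) by auto
      ultimately show "G x + \<Psi> \<epsilon> \<le> G y"
        using varF_G[of x] varF_G[of y] by simp
    qed
    show "\<forall>x\<in>C. \<forall>y\<in>C. x < y \<longrightarrow> G y \<le> G x + H"
      using osc varF_G C(2) by (auto simp: subset_eq)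
  qed fact
qed

lemma cover_num_le_four_by_varF_oscillation:
  assumes pm: "pseudo_metric_on01 d" and mono: "strict_mono_on {0..} \<Psi>" and "\<Psi> 0 = 0"
    and fin: "varF \<Psi> d 1 < \<infinity>" and A: "A \<subseteq> {0..1}" and "0 < \<epsilon>" "\<Psi> \<epsilon> < H"
    and osc: "\<forall>s\<in>A. \<forall>t\<in>A. s < t \<longrightarrow> varF \<Psi> d t \<le> varF \<Psi> d s + ereal H"
  shows "ereal_of_enat (cover_num A d \<epsilon>) \<le> ereal (4 * H / \<Psi> \<epsilon>)"
proof -
  have "0 < \<Psi> \<epsilon>"
    using strict_mono_onD[OF mono, of 0 \<epsilon>] \<open>0 < \<epsilon>\<close> \<open>\<Psi> 0 = 0\<close> by simp
  then have "1 < H / \<Psi> \<epsilon>" using \<open>\<Psi> \<epsilon> < H\<close> by (simp add: less_divide_eq)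
  moreover have "ereal_of_enat (cover_num A d \<epsilon>) \<le> ereal (1 + H / \<Psi> \<epsilon>)"
    using \<open>0 < \<Psi> \<epsilon>\<close> \<open>\<Psi> \<epsilon> < H\<close>
    by (intro cover_num_le_by_varF_oscillation[OF pm mono \<open>\<Psi> 0 = 0\<close> fin A \<open>0 < \<epsilon>\<close> _ osc]) simp
  ultimately show ?thesis by (simp add: order.trans)
qed

theorem mainTheorem12:
  fixes d :: "real \<Rightarrow> real \<Rightarrow> real" and \<Psi> :: "real \<Rightarrow> real"
  assumes "pseudo_metric_on01 d"
    and "continuous_on {0..} \<Psi>" and "strict_mono_on {0..} \<Psi>" and "\<Psi> 0 = 0"
    and "\<forall>x\<ge>0. \<Psi> x \<ge> 0"
    and "varF \<Psi> d 1 < \<infinity>"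
  shows "(\<forall>\<epsilon>. 0 < \<epsilon> \<and> ereal (\<Psi> \<epsilon>) < varF \<Psi> d 1 \<longrightarrow>
            ereal_of_enat (cover_num {0..1} d \<epsilon>)
              \<le> ereal (4 * real_of_ereal (varF \<Psi> d 1) / \<Psi> \<epsilon>))
       \<and> (\<forall>(m::int) (j::int) \<epsilon>. 1 \<le> j \<and> 0 < \<epsilon> \<and> \<Psi> \<epsilon> < 2 powi (-m) \<longrightarrow>
            ereal_of_enat (cover_num
               {s\<in>{0..1}. ereal (real_of_int (j - 1) * 2 powi (-m)) < varF \<Psi> d s
                           \<and> varF \<Psi> d s \<le> ereal (real_of_int j * 2 powi (-m))} d \<epsilon>)
              \<le> ereal (2 powi (-m + 2) / \<Psi> \<epsilon>))"
proof (intro conjI allI impI)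
  fix \<epsilon> assume \<epsilon>: "0 < \<epsilon> \<and> ereal (\<Psi> \<epsilon>) < varF \<Psi> d 1"
  obtain F1 where F1: "varF \<Psi> d 1 = ereal F1"
    using varF_real[OF assms(1,5,6), of 1] by simp
  have "\<forall>s\<in>{0..1}. \<forall>t\<in>{0..1}. s < t \<longrightarrow> varF \<Psi> d t \<le> varF \<Psi> d s + ereal F1"
    using varF_le_add_varF_1[OF assms(1,5)] F1 by simp
  then show "ereal_of_enat (cover_num {0..1} d \<epsilon>) \<le> ereal (4 * real_of_ereal (varF \<Psi> d 1) / \<Psi> \<epsilon>)"
    using \<epsilon> F1 by (intro cover_num_le_four_by_varF_oscillation[OF assms(1,3,4,6)]) auto
next
  fix m j :: int and \<epsilon> :: real
  assume a: "1 \<le> j \<and> 0 < \<epsilon> \<and> \<Psi> \<epsilon> < 2 powi (-m)"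
  let ?h = "2 powi (-m) :: real"
  let ?S = "{s\<in>{0..1}. ereal (real_of_int (j - 1) * ?h) < varF \<Psi> d s
                          \<and> varF \<Psi> d s \<le> ereal (real_of_int j * ?h)}"
  have "real_of_int j * ?h = real_of_int (j - 1) * ?h + ?h"
    by (simp add: algebra_simps)
  then have "\<forall>s\<in>?S. \<forall>t\<in>?S. s < t \<longrightarrow> varF \<Psi> d t \<le> varF \<Psi> d s + ereal ?h"
    by (metis (no_types, lifting) ereal_le_add_of_slab mem_Collect_eq)
  then have "ereal_of_enat (cover_num ?S d \<epsilon>) \<le> ereal (4 * ?h / \<Psi> \<epsilon>)"
    using a by (intro cover_num_le_four_by_varF_oscillation[OF assms(1,3,4,6)]) auto
  moreover have "4 * ?h = 2 powi (-m + 2)"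
    using power_int_add[of "2::real" "-m" 2] by simp
  ultimately show "ereal_of_enat (cover_num ?S d \<epsilon>) \<le> ereal (2 powi (-m + 2) / \<Psi> \<epsilon>)"
    by simp
qed

end
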